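(* The closure $\overline{\mathrm{K\ddot ah}(X)}$ of the Kähler cone of $X$, viewed as a cone in $L_{\mathrm{ext}}^\vee\otimes\mathbb{R}$, is a cone of the Gröbner fan $G\Sigma$.
   Context: $N\cong\mathbb{Z}^n$, $M$ dual. $X$ is a smooth projective toric variety with fan $\Sigma$ and nef-partition $\Sigma(1)=I_1\sqcup\cdots\sqcup I_r$ (each $E_i=\sum_{\rho\in I_i}D_\rho$ nef), $I_i=\{\rho_{i,1},\dots,\rho_{i,n_i}\}$, $J=\{(i,j):1\le i\le r,0\le j\le n_i\}$, $\nu_{i,j}=(\rho_{i,j},e_i)$ ($j\ge1$), $\nu_{i,0}=(0,e_i)$ in $N\times\mathbb{Z}^r$, $\mathcal{A}=\{\nu_{i,j}:(i,j)\in J\}$. $A_{\mathrm{ext}}:\mathbb{Z}^J\to N\times\mathbb{Z}^r$, $e_{i,j}\mapsto\nu_{i,j}$ (surjective), $L_{\mathrm{ext}}=\ker A_{\mathrm{ext}}$, which is isomorphic (by forgetting the $(i,0)$ coordinates) to $L=\ker(\mathbb{Z}^I\to N)\cong H_2(X,\mathbb{Z})$; hence $H^2(X,\mathbb{R})\cong L^\vee\otimes\mathbb{R}\cong L_{\mathrm{ext}}^\vee\otimes\mathbb{R}$, which is also the quotient $\mathbb{R}^J/A_{\mathrm{ext}}^\intercal(M_\mathbb{R}\times\mathbb{R}^r)$. The toric ideal is $I_\mathcal{A}=\langle y^{\ell^+}-y^{\ell^-}:\ell\in L_{\mathrm{ext}}\rangle\subset\mathbb{C}[y_{i,j}:(i,j)\in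 J]$. Each weight $\omega\in\mathbb{R}^J$ gives the initial (leading term) ideal $\mathrm{LT}_\omega(I_\mathcal{A})$ (generated by the $\omega$-maximal-weight parts of elements of $I_\mathcal{A}$, the weight of $y^m$ being $\sum\omega_{i,j}m_{i,j}$); $\omega,\omega'$ are equivalent if $\mathrm{LT}_\omega(I_\mathcal{A})=\mathrm{LT}_{\omega'}(I_\mathcal{A})$. The equivalence classes (closures) form a fan in $\mathbb{R}^J$; its image in $L_{\mathrm{ext}}^\vee\otimes\mathbb{R}$ is the Gröbner fan $G\Sigma$. *)

theory Defs
  imports "HOL-Analysis.Analysis" "HOL-Library.Poly_Mapping"
begin

text \<open>N = Z^n is the integer lattice in real^'n. The rays Sigma(1) are indexed by a finite
 type 'r, with primitive generators u :: 'r => real^'n. Since a smooth fan is simplicial,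
 a cone of the fan is determined by its set of rays; the fan is a set Sig of subsets of 'r.\<close>

definition int_vec :: "real^'n \<Rightarrow> bool" where
  "int_vec x \<longleftrightarrow> (\<forall>i. x $ i \<in> \<int>)"

definition ray_cone :: "('r \<Rightarrow> real^'n) \<Rightarrow> 'r set \<Rightarrow> (real^'n) set" where
  "ray_cone u \<sigma> = {x. \<exists>c. (\<forall>\<rho>\<in>\<sigma>. 0 \<le> c \<rho>) \<and> x = (\<Sum>\<rho>\<in>\<sigma>. c \<rho> *\<^sub>R u \<rho>)}"

definition int_span :: "('r \<Rightarrow> real^'n) \<Rightarrow> 'r set \<Rightarrow> (real^'n) set" where
  "int_span u \<sigma> = {x. \<exists>c. (\<forall>\<rho>\<in>\<sigma>. c \<rho> \<in> \<int>) \<and> x = (\<Sum>\<rho>\<in>\<sigma>. c \<rho> *\<^sub>R u \<rho>)}"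

text \<open>A fan whose rays are exactly the u rho (with integral generators), all of whose cones are
 smooth (generated by part of a Z-basis of N).\<close>
definition smooth_fan :: "('r::finite \<Rightarrow> real^'n) \<Rightarrow> 'r set set \<Rightarrow> bool" where
  "smooth_fan u Sig \<longleftrightarrow>
     (\<forall>\<rho>. int_vec (u \<rho>) \<and> {\<rho>} \<in> Sig) \<and>
     (\<forall>\<sigma>\<in>Sig. \<forall>\<tau>. \<tau> \<subseteq> \<sigma> \<longrightarrow> \<tau> \<in> Sig) \<and>
     (\<forall>\<sigma>\<in>Sig. inj_on u \<sigma> \<and> \<not> dependent (u ` \<sigma>)) \<and>
     (\<forall>\<sigma>\<in>Sig. \<forall>x. int_vec x \<and> x \<in> span (u ` \<sigma>) \<longrightarrow> x \<in> int_span u \<sigma>) \<and>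
     (\<forall>\<sigma>\<in>Sig. \<forall>\<tau>\<in>Sig. ray_cone u \<sigma> \<inter> ray_cone u \<tau> = ray_cone u (\<sigma> \<inter> \<tau>))"

definition complete_fan :: "('r \<Rightarrow> real^'n) \<Rightarrow> 'r set set \<Rightarrow> bool" where
  "complete_fan u Sig \<longleftrightarrow> (\<Union>\<sigma>\<in>Sig. ray_cone u \<sigma>) = UNIV"

definition max_cones :: "('r \<Rightarrow> real^'n) \<Rightarrow> 'r set set \<Rightarrow> 'r set set" where
  "max_cones u Sig = {\<sigma>\<in>Sig. card \<sigma> = CARD('n)}"

text \<open>Torus-invariant R-divisor D = sum a_rho D_rho. Nef: the support function is convex,
 i.e. on each maximal cone it is given by some m in M_R with <m,u_rho> = -a_rho on the cone and
 >= -a_rho off it. Ample: strictly convex (strict inequality off the cone).\<close>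
definition nef_div :: "('r \<Rightarrow> real^'n) \<Rightarrow> 'r set set \<Rightarrow> ('r \<Rightarrow> real) \<Rightarrow> bool" where
  "nef_div u Sig a \<longleftrightarrow> (\<forall>\<sigma>\<in>max_cones u Sig. \<exists>m::real^'n.
      (\<forall>\<rho>\<in>\<sigma>. m \<bullet> u \<rho> = - a \<rho>) \<and> (\<forall>\<rho>. \<rho> \<notin> \<sigma> \<longrightarrow> m \<bullet> u \<rho> \<ge> - a \<rho>))"

definition ample_div :: "('r \<Rightarrow> real^'n) \<Rightarrow> 'r set set \<Rightarrow> ('r \<Rightarrow> real) \<Rightarrow> bool" where
  "ample_div u Sig a \<longleftrightarrow> (\<forall>\<sigma>\<in>max_cones u Sig. \<exists>m::real^'n.
      (\<forall>\<rho>\<in>\<sigma>. m \<bullet> u \<rho> = - a \<rho>) \<and> (\<forall>\<rho>. \<rho> \<notin> \<sigma> \<longrightarrow> m \<bullet> u \<rho> > - a \<rho>))"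

definition projective_fan :: "('r \<Rightarrow> real^'n) \<Rightarrow> 'r set set \<Rightarrow> bool" where
  "projective_fan u Sig \<longleftrightarrow> (\<exists>a. ample_div u Sig a)"

text \<open>Nef-partition given by p : Sigma(1) -> 'k (surjective), I_k = p^{-1}(k).\<close>
definition nef_partition :: "('r \<Rightarrow> real^'n) \<Rightarrow> 'r set set \<Rightarrow> ('r \<Rightarrow> 'k) \<Rightarrow> bool" where
  "nef_partition u Sig p \<longleftrightarrow> surj p \<and>
     (\<forall>k. nef_div u Sig (\<lambda>\<rho>. if p \<rho> = k then 1 else 0))"

text \<open>J = Sigma(1) + {1..r}: Inl rho_{i,j} stands for (i,j) with j >= 1, Inr i for (i,0).\<close>

definition L_ext :: "('r::finite \<Rightarrow> real^'n) \<Rightarrow> ('r \<Rightarrow> 'k::finite) \<Rightarrow> (('r + 'k) \<Rightarrow> int) set" where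
  "L_ext u p = {l. (\<Sum>\<rho>\<in>UNIV. of_int (l (Inl \<rho>)) *\<^sub>R u \<rho>) = 0 \<and>
                  (\<forall>k. (\<Sum>\<rho>\<in>{\<rho>. p \<rho> = k}. l (Inl \<rho>)) + l (Inr k) = 0)}"

text \<open>The divisor class in H^2(X,R) of a weight w in R^J, via R^J/A_ext^T(M_R x R^r) = L_ext^dual
 = L^dual = H^2(X,R) (forgetting the (i,0) coordinates): the class of sum (w_{i,j}-w_{i,0}) D_{rho_{i,j}}.\<close>
definition div_of_weight :: "('r::finite \<Rightarrow> 'k::finite) \<Rightarrow> real^('r + 'k) \<Rightarrow> ('r \<Rightarrow> real)" where
  "div_of_weight p w = (\<lambda>\<rho>. w $ Inl \<rho> - w $ Inr (p \<rho>))"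

text \<open>Kaehler cone of X, pulled back to R^J (classes of ample R-divisors).\<close>
definition kahler_pre :: "('r::finite \<Rightarrow> real^'n) \<Rightarrow> 'r set set \<Rightarrow> ('r \<Rightarrow> 'k::finite) \<Rightarrow> (real^('r + 'k)) set" where
  "kahler_pre u Sig p = {w. ample_div u Sig (div_of_weight p w)}"

type_synonym 'v mpoly = "('v \<Rightarrow>\<^sub>0 nat) \<Rightarrow>\<^sub>0 complex"

definition ideal_gen :: "'v mpoly set \<Rightarrow> 'v mpoly set" where
  "ideal_gen G = {f. \<exists>F q. finite F \<and> F \<subseteq> G \<and> f = (\<Sum>g\<in>F. q g * g)}"

definition monom_of :: "('v::finite \<Rightarrow> nat) \<Rightarrow> ('v \<Rightarrow>\<^sub>0 nat)" where
  "monom_of e = Abs_poly_mapping e"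

definition binom :: "('v::finite \<Rightarrow> int) \<Rightarrow> 'v mpoly" where
  "binom l = Poly_Mapping.single (monom_of (\<lambda>v. nat (l v))) 1
           - Poly_Mapping.single (monom_of (\<lambda>v. nat (- l v))) 1"

definition toric_ideal :: "('r::finite \<Rightarrow> real^'n) \<Rightarrow> ('r \<Rightarrow> 'k::finite) \<Rightarrow> ('r + 'k) mpoly set" where
  "toric_ideal u p = ideal_gen (binom ` L_ext u p)"

definition mweight :: "real^'v \<Rightarrow> ('v::finite \<Rightarrow>\<^sub>0 nat) \<Rightarrow> real" where
  "mweight w m = (\<Sum>v\<in>UNIV. w $ v * of_nat (Poly_Mapping.lookup m v))"

definition init_form :: "real^'v \<Rightarrow> ('v::finite) mpoly \<Rightarrow> 'v mpoly" where
  "init_form w f = Abs_poly_mapping (\<lambda>m.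
      if mweight w m = Max (mweight w ` Poly_Mapping.keys f) then Poly_Mapping.lookup f m else 0)"

definition init_ideal :: "real^'v \<Rightarrow> ('v::finite) mpoly set \<Rightarrow> 'v mpoly set" where
  "init_ideal w I = ideal_gen (init_form w ` I)"

definition groebner_cone :: "('v::finite) mpoly set \<Rightarrow> real^'v \<Rightarrow> (real^'v) set" where
  "groebner_cone I w = closure {w'. init_ideal w' I = init_ideal w I}"

end

theory Submission
  imports Defs
begin

text \<open>Grade the polynomial ring by \<open>A_ext\<close>. The toric ideal is spanned by the binomials
  \<open>x\<^sup>a - x\<^sup>m\<close> with \<open>a\<close>, \<open>m\<close> of equal multidegree, so none of its elements has a single
  monomial in some multidegree. Call a monomial standard if its \<open>\<Sigma>(1)\<close>-part is supported on a
  maximal cone. Because the fan is smooth and complete and the partition is nef, every multidegree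
  contains a standard monomial; for a Kaehler weight it is the unique lightest monomial of its
  multidegree, as an ample support function is strictly convex. Hence every Kaehler weight has the
  same initial ideal, spanned by the non-standard monomials. Conversely, if a weight has this initial
  ideal, the standard monomials are lightest in their multidegrees, which is exactly convexity of the
  support function of its class: the class is nef, so the weight lies in the closure of the Kaehler
  cone. The Groebner class of a Kaehler weight is thus squeezed between the Kaehler cone and its
  closure.\<close>

abbreviation monom :: "('v \<Rightarrow>\<^sub>0 nat) \<Rightarrow> 'v mpoly" where
  "monom e \<equiv> Poly_Mapping.single e 1"

lemma lookup_monom_of [simp]: "Poly_Mapping.lookup (monom_of (e :: 'v::finite \<Rightarrow> nat)) = e"
  unfolding monom_of_def by simp

lemma poly_mapping_sum_single:
  "q = (\<Sum>t\<in>Poly_Mapping.keys q. Poly_Mapping.single t (Poly_Mapping.lookup q t))"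
proof (rule poly_mapping_eqI)
  fix k
  have "Poly_Mapping.lookup (\<Sum>t\<in>Poly_Mapping.keys q. Poly_Mapping.single t (Poly_Mapping.lookup q t)) k
      = (\<Sum>t\<in>Poly_Mapping.keys q. if t = k then Poly_Mapping.lookup q t else 0)"
    by (simp add: lookup_sum lookup_single when_def)
  also have "\<dots> = Poly_Mapping.lookup q k" by (simp add: in_keys_iff)
  finally show "Poly_Mapping.lookup q k =
      Poly_Mapping.lookup (\<Sum>t\<in>Poly_Mapping.keys q. Poly_Mapping.single t (Poly_Mapping.lookup q t)) k"
    by simp
qed

lemma monom_eq_iff: "monom e = monom e' \<longleftrightarrow> e = e'"
  by (metis lookup_single_eq lookup_single_not_eq zero_neq_one)

lemma lookup_monom_diff:
  "a \<noteq> m \<Longrightarrow> Poly_Mapping.lookup (monom a - monom m) e = (if e = a then 1 else if e = m then -1 else 0)"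
  by (auto simp: lookup_minus lookup_single when_def)

lemma keys_monom_diff: "a \<noteq> m \<Longrightarrow> Poly_Mapping.keys (monom a - monom m) = {a, m}"
  by (auto simp: in_keys_iff lookup_minus lookup_single when_def split: if_splits)

subsection \<open>Ideals and initial forms\<close>

lemma in_ideal_gen: "g \<in> G \<Longrightarrow> g \<in> ideal_gen G"
  unfolding ideal_gen_def by (intro CollectI exI[of _ "{g}"] exI[of _ "\<lambda>_. 1"]) auto

lemma in_ideal_gen_if_monoms:
  assumes "\<And>e. e \<in> Poly_Mapping.keys g \<Longrightarrow> monom e \<in> G"
  shows "g \<in> ideal_gen G"
proof -
  have inj: "inj_on monom (Poly_Mapping.keys g)"
    by (auto simp: inj_on_def monom_eq_iff)
  define q :: "'a mpoly \<Rightarrow> 'a mpoly" where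
    "q h = Poly_Mapping.single 0 (Poly_Mapping.lookup g (inv_into (Poly_Mapping.keys g) monom h))" for h
  have "(\<Sum>h\<in>monom ` Poly_Mapping.keys g. q h * h) = (\<Sum>e\<in>Poly_Mapping.keys g. q (monom e) * monom e)"
    by (simp add: sum.reindex[OF inj])
  also have "\<dots> = (\<Sum>e\<in>Poly_Mapping.keys g. Poly_Mapping.single e (Poly_Mapping.lookup g e))"
    by (rule sum.cong) (simp_all add: q_def mult_single inv_into_f_f[OF inj])
  also have "\<dots> = g" by (rule poly_mapping_sum_single[symmetric])
  finally show ?thesis
    unfolding ideal_gen_def using assms
    by (intro CollectI exI[of _ "monom ` Poly_Mapping.keys g"] exI[of _ q]) auto
qed

definition supported_outside :: "(('v \<Rightarrow>\<^sub>0 nat) \<Rightarrow> bool) \<Rightarrow> 'v mpoly set" where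
  "supported_outside std = {g. \<forall>e\<in>Poly_Mapping.keys g. \<not> std e}"

text \<open>When \<open>std\<close> is closed under division, \<open>supported_outside std\<close> is the monomial
  ideal generated by the monomials outside \<open>std\<close>.\<close>

lemma ideal_gen_supported_outside:
  assumes std_dvd: "\<And>s t. std (s + t) \<Longrightarrow> std t"
    and G: "G \<subseteq> supported_outside std"
  shows "ideal_gen G \<subseteq> supported_outside std"
proof
  fix f assume "f \<in> ideal_gen G"
  then obtain F q where F: "finite F" "F \<subseteq> G" "f = (\<Sum>g\<in>F. q g * g)"
    unfolding ideal_gen_def by blast
  have mult: "h * g \<in> supported_outside std" if "g \<in> G" for g h
  proof (unfold supported_outside_def, intro CollectI ballI)
    fix e assume "e \<in> Poly_Mapping.keys (h * g)"
    then obtain s t where "e = s + t" "t \<in> Poly_Mapping.keys g"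
      using keys_mult by blast
    then show "\<not> std e" using G that std_dvd unfolding supported_outside_def by blast
  qed
  have "(\<Sum>g\<in>F'. q g * g) \<in> supported_outside std" if "F' \<subseteq> F" for F'
    using finite_subset[OF that F(1)] that
  proof (induction F' rule: finite_induct)
    case empty then show ?case by (simp add: supported_outside_def)
  next
    case (insert x F')
    then show ?case
      using mult[of x "q x"] F(2) keys_add unfolding supported_outside_def by fastforce
  qed
  then show "f \<in> supported_outside std" using F by auto
qed

lemma lookup_init_form:
  "Poly_Mapping.lookup (init_form w f) m =
   (if mweight w m = Max (mweight w ` Poly_Mapping.keys f) then Poly_Mapping.lookup f m else 0)"
proof -
  have "finite {m. (if mweight w m = Max (mweight w ` Poly_Mapping.keys f)
                    then Poly_Mapping.lookup f m else 0) \<noteq> 0}"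
    by (rule finite_subset[of _ "Poly_Mapping.keys f"]) (auto simp: in_keys_iff)
  then show ?thesis unfolding init_form_def by simp
qed

lemma init_form_monom_diff:
  assumes "a \<noteq> m" "mweight w m < mweight w a"
  shows "init_form w (monom a - monom m) = monom a"
proof (rule poly_mapping_eqI)
  fix e
  have "Max (mweight w ` Poly_Mapping.keys (monom a - monom m)) = mweight w a"
    using assms by (simp add: keys_monom_diff)
  then show "Poly_Mapping.lookup (init_form w (monom a - monom m)) e = Poly_Mapping.lookup (monom a) e"
    using assms by (auto simp: lookup_init_form lookup_monom_diff lookup_single when_def)
qed

subsection \<open>The multidegree and the toric ideal\<close>

text \<open>The multidegree of the monomial with exponent \<open>e\<close> is \<open>A_ext e \<in> N \<times> \<int>\<^sup>r\<close>.\<close>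

definition lattice_deg :: "('r::finite \<Rightarrow> real^'n) \<Rightarrow> ('r + 'k \<Rightarrow>\<^sub>0 nat) \<Rightarrow> real^'n" where
  "lattice_deg u e = (\<Sum>\<rho>\<in>UNIV. real (Poly_Mapping.lookup e (Inl \<rho>)) *\<^sub>R u \<rho>)"

definition block_deg :: "('r::finite \<Rightarrow> 'k) \<Rightarrow> ('r + 'k \<Rightarrow>\<^sub>0 nat) \<Rightarrow> 'k \<Rightarrow> int" where
  "block_deg p e k = (\<Sum>\<rho>\<in>{\<rho>. p \<rho> = k}. int (Poly_Mapping.lookup e (Inl \<rho>)))
                     + int (Poly_Mapping.lookup e (Inr k))"

definition multideg ::
    "('r::finite \<Rightarrow> real^'n) \<Rightarrow> ('r \<Rightarrow> 'k) \<Rightarrow> ('r + 'k \<Rightarrow>\<^sub>0 nat) \<Rightarrow> (real^'n) \<times> ('k \<Rightarrow> int)" where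
  "multideg u p e = (lattice_deg u e, block_deg p e)"

lemma lattice_deg_add: "lattice_deg u (s + t) = lattice_deg u s + lattice_deg u t"
  by (simp add: lattice_deg_def lookup_add scaleR_add_left sum.distrib)

lemma block_deg_add: "block_deg p (s + t) = (\<lambda>k. block_deg p s k + block_deg p t k)"
  by (simp add: block_deg_def lookup_add sum.distrib fun_eq_iff)

lemma multideg_add_eq:
  "multideg u p (s + t) = multideg u p (s + t') \<longleftrightarrow> multideg u p t = multideg u p t'"
  by (auto simp: multideg_def lattice_deg_add block_deg_add fun_eq_iff)

lemma exponent_diff_in_L_ext_iff:
  "(\<lambda>v. int (Poly_Mapping.lookup a v) - int (Poly_Mapping.lookup m v)) \<in> L_ext u p
   \<longleftrightarrow> multideg u p a = multideg u p m"
proof -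
  have "(\<Sum>\<rho>\<in>UNIV. real_of_int (int (Poly_Mapping.lookup a (Inl \<rho>)) - int (Poly_Mapping.lookup m (Inl \<rho>))) *\<^sub>R u \<rho>)
      = lattice_deg u a - lattice_deg u m"
    by (simp add: lattice_deg_def scaleR_diff_left sum_subtractf)
  moreover have "(\<Sum>\<rho>\<in>{\<rho>. p \<rho> = k}. int (Poly_Mapping.lookup a (Inl \<rho>)) - int (Poly_Mapping.lookup m (Inl \<rho>)))
      + (int (Poly_Mapping.lookup a (Inr k)) - int (Poly_Mapping.lookup m (Inr k)))
      = block_deg p a k - block_deg p m k" for k
    by (simp add: block_deg_def sum_subtractf)
  ultimately show ?thesis
    by (simp add: L_ext_def multideg_def fun_eq_iff)
qed

lemma monom_diff_in_toric_ideal: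
  assumes "multideg u p a = multideg u p m"
  shows "monom a - monom m \<in> toric_ideal u p"
proof -
  define l where "l v = int (Poly_Mapping.lookup a v) - int (Poly_Mapping.lookup m v)" for v
  define c where "c = Abs_poly_mapping (\<lambda>v. min (Poly_Mapping.lookup a v) (Poly_Mapping.lookup m v))"
  have "l \<in> L_ext u p"
    using assms exponent_diff_in_L_ext_iff unfolding l_def by blast
  moreover have "c + monom_of (\<lambda>v. nat (l v)) = a" "c + monom_of (\<lambda>v. nat (- l v)) = m"
    by (rule poly_mapping_eqI; simp add: lookup_add c_def l_def)+
  then have "monom c * binom l = monom a - monom m"
    unfolding binom_def by (simp add: right_diff_distrib mult_single)
  ultimately show ?thesis unfolding toric_ideal_def ideal_gen_def
    by (intro CollectI exI[of _ "{binom l}"] exI[of _ "\<lambda>_. monom c"]) auto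
qed

text \<open>Summing the coefficients of one multidegree is a linear form vanishing on the toric ideal,
  since every generator \<open>binom l\<close> is a difference of two monomials of equal multidegree.
  Hence no polynomial of the ideal has exactly one monomial in a given multidegree.\<close>

definition coeff_sum_in_deg ::
    "('r::finite \<Rightarrow> real^'n) \<Rightarrow> ('r \<Rightarrow> 'k) \<Rightarrow> (real^'n) \<times> ('k \<Rightarrow> int) \<Rightarrow> ('r + 'k) mpoly \<Rightarrow> complex" where
  "coeff_sum_in_deg u p b f =
     (\<Sum>e\<in>Poly_Mapping.keys f. if multideg u p e = b then Poly_Mapping.lookup f e else 0)"

lemma coeff_sum_in_deg_superset:
  assumes "finite S" "Poly_Mapping.keys f \<subseteq> S"
  shows "coeff_sum_in_deg u p b f = (\<Sum>e\<in>S. if multideg u p e = b then Poly_Mapping.lookup f e else 0)"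
  unfolding coeff_sum_in_deg_def using assms
  by (intro sum.mono_neutral_left) (auto simp: in_keys_iff)

lemma coeff_sum_in_deg_add:
  "coeff_sum_in_deg u p b (f + g) = coeff_sum_in_deg u p b f + coeff_sum_in_deg u p b g"
proof -
  let ?S = "Poly_Mapping.keys f \<union> Poly_Mapping.keys g"
  have "coeff_sum_in_deg u p b (f + g)
      = (\<Sum>e\<in>?S. if multideg u p e = b then Poly_Mapping.lookup (f + g) e else 0)"
    by (rule coeff_sum_in_deg_superset) (auto simp: keys_add)
  also have "\<dots> = (\<Sum>e\<in>?S. if multideg u p e = b then Poly_Mapping.lookup f e else 0)
      + (\<Sum>e\<in>?S. if multideg u p e = b then Poly_Mapping.lookup g e else 0)"
    by (simp add: lookup_add sum.distrib[symmetric] if_distrib cong: if_cong)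
  also have "\<dots> = coeff_sum_in_deg u p b f + coeff_sum_in_deg u p b g"
    by (simp add: coeff_sum_in_deg_superset[symmetric])
  finally show ?thesis .
qed

lemma coeff_sum_in_deg_uminus: "coeff_sum_in_deg u p b (- f) = - coeff_sum_in_deg u p b f"
  unfolding coeff_sum_in_deg_def by (simp add: sum_negf[symmetric] if_distrib cong: if_cong)

lemma coeff_sum_in_deg_diff:
  "coeff_sum_in_deg u p b (f - g) = coeff_sum_in_deg u p b f - coeff_sum_in_deg u p b g"
  using coeff_sum_in_deg_add[of u p b f "- g"] by (simp add: coeff_sum_in_deg_uminus)

lemma coeff_sum_in_deg_zero [simp]: "coeff_sum_in_deg u p b 0 = 0"
  by (simp add: coeff_sum_in_deg_def)

lemma coeff_sum_in_deg_sum: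
  "finite F \<Longrightarrow> coeff_sum_in_deg u p b (\<Sum>g\<in>F. h g) = (\<Sum>g\<in>F. coeff_sum_in_deg u p b (h g))"
  by (induction F rule: finite_induct) (auto simp: coeff_sum_in_deg_add)

lemma coeff_sum_in_deg_single:
  "coeff_sum_in_deg u p b (Poly_Mapping.single e c) = (if multideg u p e = b then c else 0)"
  by (cases "c = 0") (auto simp: coeff_sum_in_deg_def)

lemma coeff_sum_in_deg_mult_binom:
  assumes "l \<in> L_ext u p"
  shows "coeff_sum_in_deg u p b (q * binom l) = 0"
proof -
  let ?pos = "monom_of (\<lambda>v. nat (l v))" and ?neg = "monom_of (\<lambda>v. nat (- l v))"
  have "(\<lambda>v. int (Poly_Mapping.lookup ?pos v) - int (Poly_Mapping.lookup ?neg v)) = l"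
    by (auto simp: fun_eq_iff)
  then have deg: "multideg u p (t + ?pos) = multideg u p (t + ?neg)" for t
    using assms exponent_diff_in_L_ext_iff[of ?pos ?neg u p] multideg_add_eq by metis
  have "q * binom l = (\<Sum>t\<in>Poly_Mapping.keys q.
      Poly_Mapping.single (t + ?pos) (Poly_Mapping.lookup q t)
      - Poly_Mapping.single (t + ?neg) (Poly_Mapping.lookup q t))"
    by (subst poly_mapping_sum_single[of q])
      (simp add: binom_def sum_distrib_right right_diff_distrib mult_single sum_subtractf)
  then show ?thesis
    by (simp add: coeff_sum_in_deg_sum coeff_sum_in_deg_diff coeff_sum_in_deg_single deg)
qed

lemma coeff_sum_in_deg_toric_ideal:
  assumes "f \<in> toric_ideal u p"
  shows "coeff_sum_in_deg u p b f = 0"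
proof -
  obtain F q where F: "finite F" "F \<subseteq> binom ` L_ext u p" and f: "f = (\<Sum>g\<in>F. q g * g)"
    using assms unfolding toric_ideal_def ideal_gen_def by blast
  have "coeff_sum_in_deg u p b (q g * g) = 0" if "g \<in> F" for g
    using that F(2) coeff_sum_in_deg_mult_binom by blast
  then show ?thesis using F(1) by (simp add: f coeff_sum_in_deg_sum)
qed

subsection \<open>Initial ideals of the toric ideal\<close>

text \<open>Let \<open>std\<close> single out, in every multidegree, a monomial that is strictly the lightest of
  its multidegree. A polynomial of the ideal has no single monomial in the multidegree of its
  initial monomials, so these are never lightest, hence never standard.\<close>

lemma init_form_toric_ideal_supported_outside:
  fixes u :: "'r::finite \<Rightarrow> real^'n" and p :: "'r \<Rightarrow> 'k::finite"
  assumes lightest: "\<And>a m. std m \<Longrightarrow> multideg u p a = multideg u p m \<Longrightarrow> a \<noteq> m \<Longrightarrow> mweight w m < mweight w a"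
    and f: "f \<in> toric_ideal u p"
  shows "init_form w f \<in> supported_outside std"
  unfolding supported_outside_def
proof (intro CollectI ballI notI)
  fix m assume m: "m \<in> Poly_Mapping.keys (init_form w f)" and std: "std m"
  have m_key: "m \<in> Poly_Mapping.keys f"
    and m_max: "mweight w m = Max (mweight w ` Poly_Mapping.keys f)"
    using m by (auto simp: in_keys_iff lookup_init_form split: if_splits)
  have others: "(if multideg u p e = multideg u p m then Poly_Mapping.lookup f e else 0) = 0"
    if "e \<in> Poly_Mapping.keys f - {m}" for e
  proof (rule ccontr)
    assume "\<not> ?thesis"
    then have "multideg u p e = multideg u p m" by (auto split: if_splits)
    then have "mweight w m < mweight w e" using lightest std that by blast
    moreover have "mweight w e \<le> mweight w m" using m_max that by simp
    ultimately show False by simp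
  qed
  have "0 = coeff_sum_in_deg u p (multideg u p m) f"
    using coeff_sum_in_deg_toric_ideal[OF f] by simp
  also have "\<dots> = Poly_Mapping.lookup f m"
    unfolding coeff_sum_in_deg_def using m_key others by (simp add: sum.remove)
  finally show False using m_key by (simp add: in_keys_iff)
qed

lemma init_toric_ideal_eq_supported_outside:
  fixes u :: "'r::finite \<Rightarrow> real^'n" and p :: "'r \<Rightarrow> 'k::finite"
  assumes exists: "\<And>a. \<exists>m. std m \<and> multideg u p m = multideg u p a"
    and lightest: "\<And>a m. std m \<Longrightarrow> multideg u p a = multideg u p m \<Longrightarrow> a \<noteq> m \<Longrightarrow> mweight w m < mweight w a"
    and std_dvd: "\<And>s t. std (s + t) \<Longrightarrow> std t"
  shows "init_ideal w (toric_ideal u p) = supported_outside std"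
proof
  have "init_form w f \<in> supported_outside std" if "f \<in> toric_ideal u p" for f
    using lightest that by (rule init_form_toric_ideal_supported_outside)
  then show "init_ideal w (toric_ideal u p) \<subseteq> supported_outside std"
    unfolding init_ideal_def by (intro ideal_gen_supported_outside[OF std_dvd] image_subsetI)
next
  show "supported_outside std \<subseteq> init_ideal w (toric_ideal u p)"
  proof
    fix g assume g: "g \<in> supported_outside std"
    show "g \<in> init_ideal w (toric_ideal u p)"
      unfolding init_ideal_def
    proof (rule in_ideal_gen_if_monoms)
      fix e assume e: "e \<in> Poly_Mapping.keys g"
      obtain m where m: "std m" "multideg u p m = multideg u p e" using exists by blast
      have "e \<noteq> m" using m(1) g e unfolding supported_outside_def by blast
      then have "init_form w (monom e - monom m) = monom e"
        using lightest m by (intro init_form_monom_diff) auto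
      moreover have "monom e - monom m \<in> toric_ideal u p"
        using m(2) by (intro monom_diff_in_toric_ideal) simp
      ultimately show "monom e \<in> init_form w ` toric_ideal u p" by (metis image_eqI)
    qed
  qed
qed

lemma init_toric_ideal_lightest:
  fixes u :: "'r::finite \<Rightarrow> real^'n" and p :: "'r \<Rightarrow> 'k::finite"
  assumes eq: "init_ideal w (toric_ideal u p) = supported_outside std"
    and std: "std m" and deg: "multideg u p a = multideg u p m"
  shows "mweight w m \<le> mweight w a"
proof (rule ccontr)
  assume heavier: "\<not> ?thesis"
  then have "a \<noteq> m" by auto
  have "monom a - monom m \<in> toric_ideal u p" using deg by (rule monom_diff_in_toric_ideal)
  then have "init_form w (monom a - monom m) \<in> init_ideal w (toric_ideal u p)"
    unfolding init_ideal_def by (intro in_ideal_gen) auto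
  moreover have "m \<in> Poly_Mapping.keys (init_form w (monom a - monom m))"
    using \<open>a \<noteq> m\<close> heavier
    by (simp add: in_keys_iff lookup_init_form keys_monom_diff lookup_monom_diff max_def)
  ultimately show False using eq std unfolding supported_outside_def by blast
qed

subsection \<open>Smooth complete fans\<close>

lemma convex_cone_ray_cone: "convex_cone (ray_cone u \<sigma>)"
  unfolding convex_cone_iff
proof (intro conjI ballI allI impI)
  show "0 \<in> ray_cone u \<sigma>" unfolding ray_cone_def by (intro CollectI exI[of _ "\<lambda>_. 0"]) auto
  fix x assume "x \<in> ray_cone u \<sigma>"
  then obtain c where c: "\<forall>\<rho>\<in>\<sigma>. 0 \<le> c \<rho>" "x = (\<Sum>\<rho>\<in>\<sigma>. c \<rho> *\<^sub>R u \<rho>)"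
    unfolding ray_cone_def by blast
  {
    fix y assume "y \<in> ray_cone u \<sigma>"
    then obtain d where d: "\<forall>\<rho>\<in>\<sigma>. 0 \<le> d \<rho>" "y = (\<Sum>\<rho>\<in>\<sigma>. d \<rho> *\<^sub>R u \<rho>)"
      unfolding ray_cone_def by blast
    show "x + y \<in> ray_cone u \<sigma>" unfolding ray_cone_def using c d
      by (intro CollectI exI[of _ "\<lambda>\<rho>. c \<rho> + d \<rho>"]) (auto simp: scaleR_add_left sum.distrib)
  }
  fix t :: real assume "0 \<le> t"
  then show "t *\<^sub>R x \<in> ray_cone u \<sigma>" unfolding ray_cone_def using c
    by (intro CollectI exI[of _ "\<lambda>\<rho>. t * c \<rho>"]) (auto simp: scaleR_sum_right)
qed

lemma ray_cone_eq_convex_cone_hull: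
  fixes u :: "'r::finite \<Rightarrow> real^'n"
  shows "ray_cone u \<sigma> = convex_cone hull (u ` \<sigma>)"
proof
  show "ray_cone u \<sigma> \<subseteq> convex_cone hull (u ` \<sigma>)"
  proof
    fix x assume "x \<in> ray_cone u \<sigma>"
    then obtain c where c: "\<forall>\<rho>\<in>\<sigma>. 0 \<le> c \<rho>" "x = (\<Sum>\<rho>\<in>\<sigma>. c \<rho> *\<^sub>R u \<rho>)"
      unfolding ray_cone_def by blast
    have "(\<Sum>\<rho>\<in>S. c \<rho> *\<^sub>R u \<rho>) \<in> convex_cone hull (u ` \<sigma>)" if "S \<subseteq> \<sigma>" for S
      using finite[of S] that
    proof (induction S rule: finite_induct)
      case empty then show ?case by (simp add: convex_cone_hull_contains_0)
    next
      case (insert a S)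
      then show ?case
        by (simp, intro convex_cone_hull_add convex_cone_hull_mul) (auto simp: c hull_inc)
    qed
    then show "x \<in> convex_cone hull (u ` \<sigma>)" using c by simp
  qed
next
  have "u \<rho> \<in> ray_cone u \<sigma>" if "\<rho> \<in> \<sigma>" for \<rho>
  proof -
    have "(\<Sum>\<rho>'\<in>\<sigma>. (if \<rho>' = \<rho> then 1 else 0) *\<^sub>R u \<rho>') = (\<Sum>\<rho>'\<in>\<sigma>. if \<rho>' = \<rho> then u \<rho>' else 0)"
      by (rule sum.cong) auto
    also have "\<dots> = u \<rho>" using that by simp
    finally show ?thesis unfolding ray_cone_def using that
      by (intro CollectI exI[of _ "\<lambda>\<rho>'. if \<rho>' = \<rho> then 1 else 0"]) auto
  qed
  then show "convex_cone hull (u ` \<sigma>) \<subseteq> ray_cone u \<sigma>"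
    by (intro hull_minimal convex_cone_ray_cone) auto
qed

lemma ray_cone_subset_span: "ray_cone u \<sigma> \<subseteq> span (u ` \<sigma>)"
proof
  fix x assume "x \<in> ray_cone u \<sigma>"
  then obtain c where "x = (\<Sum>\<rho>\<in>\<sigma>. c \<rho> *\<^sub>R u \<rho>)"
    unfolding ray_cone_def by blast
  moreover have "(\<Sum>\<rho>\<in>\<sigma>. c \<rho> *\<^sub>R u \<rho>) \<in> span (u ` \<sigma>)"
    by (rule span_sum) (simp add: span_mul span_base)
  ultimately show "x \<in> span (u ` \<sigma>)" by simp
qed

lemma smooth_fan_coeffs_unique:
  fixes u :: "'r::finite \<Rightarrow> real^'n"
  assumes sm: "smooth_fan u Sig" and \<sigma>: "\<sigma> \<in> Sig"
    and eq: "(\<Sum>\<rho>\<in>\<sigma>. c \<rho> *\<^sub>R u \<rho>) = (\<Sum>\<rho>\<in>\<sigma>. d \<rho> *\<^sub>R u \<rho>)" and \<rho>: "\<rho> \<in> \<sigma>"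
  shows "c \<rho> = d \<rho>"
proof (rule ccontr)
  assume ne: "c \<rho> \<noteq> d \<rho>"
  have inj: "inj_on u \<sigma>" and indep: "\<not> dependent (u ` \<sigma>)"
    using sm \<sigma> unfolding smooth_fan_def by auto
  define f where "f v = c (inv_into \<sigma> u v) - d (inv_into \<sigma> u v)" for v
  have "(\<Sum>v\<in>u ` \<sigma>. f v *\<^sub>R v) = (\<Sum>\<rho>\<in>\<sigma>. c \<rho> *\<^sub>R u \<rho>) - (\<Sum>\<rho>\<in>\<sigma>. d \<rho> *\<^sub>R u \<rho>)"
    by (simp add: sum.reindex[OF inj] f_def inv_into_f_f[OF inj] scaleR_diff_left sum_subtractf)
  moreover have "f (u \<rho>) \<noteq> 0" using \<rho> ne by (simp add: f_def inv_into_f_f[OF inj])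
  ultimately have "dependent (u ` \<sigma>)" using eq \<rho>
    by (subst dependent_finite) auto
  then show False using indep by blast
qed

lemma smooth_fan_card_le:
  fixes u :: "'r::finite \<Rightarrow> real^'n"
  assumes "smooth_fan u Sig" "\<sigma> \<in> Sig"
  shows "card (u ` \<sigma>) = card \<sigma>" "card \<sigma> \<le> CARD('n)"
proof -
  have "inj_on u \<sigma>" and indep: "\<not> dependent (u ` \<sigma>)"
    using assms unfolding smooth_fan_def by auto
  then show "card (u ` \<sigma>) = card \<sigma>" by (simp add: card_image)
  then show "card \<sigma> \<le> CARD('n)" using independent_bound[OF indep] by simp
qed

lemma span_max_cone:
  fixes u :: "'r::finite \<Rightarrow> real^'n"
  assumes sm: "smooth_fan u Sig" and \<sigma>: "\<sigma> \<in> max_cones u Sig"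
  shows "span (u ` \<sigma>) = UNIV"
proof -
  have \<sigma>': "\<sigma> \<in> Sig" "card \<sigma> = CARD('n)" using \<sigma> unfolding max_cones_def by auto
  have indep: "\<not> dependent (u ` \<sigma>)" using sm \<sigma>' unfolding smooth_fan_def by auto
  have "UNIV \<subseteq> span (u ` \<sigma>)"
    by (rule card_ge_dim_independent[OF _ indep]) (use smooth_fan_card_le[OF sm \<sigma>'(1)] \<sigma>' in auto)
  then show ?thesis by auto
qed

text \<open>The cones of lower dimension lie in finitely many proper subspaces, a null set; so the
  closed union of the maximal cones contains a dense set, hence everything.\<close>

lemma complete_fan_max_cones_cover:
  fixes u :: "'r::finite \<Rightarrow> real^'n"
  assumes sm: "smooth_fan u Sig" and cf: "complete_fan u Sig"
  obtains \<sigma> where "\<sigma> \<in> max_cones u Sig" "x \<in> ray_cone u \<sigma>"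
proof -
  define U where "U = (\<Union>\<sigma>\<in>max_cones u Sig. ray_cone u \<sigma>)"
  define Z where "Z = (\<Union>\<sigma>\<in>{\<sigma>\<in>Sig. card \<sigma> < CARD('n)}. span (u ` \<sigma>))"
  have "closed U" unfolding U_def
    by (intro closed_UN) (auto simp: ray_cone_eq_convex_cone_hull closed_convex_cone_hull)
  have "negligible Z" unfolding Z_def
  proof (intro negligible_Union)
    show "finite ((\<lambda>\<sigma>. span (u ` \<sigma>)) ` {\<sigma> \<in> Sig. card \<sigma> < CARD('n)})" by simp
    fix T assume "T \<in> (\<lambda>\<sigma>. span (u ` \<sigma>)) ` {\<sigma> \<in> Sig. card \<sigma> < CARD('n)}"
    then obtain \<sigma> where "\<sigma> \<in> Sig" "card \<sigma> < CARD('n)" "T = span (u ` \<sigma>)" by blast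
    moreover have "dim (u ` \<sigma>) \<le> card (u ` \<sigma>)" by (rule dim_le_card') simp
    ultimately show "negligible T"
      using smooth_fan_card_le[OF sm] by (intro negligible_lowdim) auto
  qed
  have "y \<in> U" if "y \<notin> Z" for y
  proof -
    obtain \<sigma> where \<sigma>: "\<sigma> \<in> Sig" "y \<in> ray_cone u \<sigma>"
      using cf unfolding complete_fan_def by blast
    have "\<not> card \<sigma> < CARD('n)"
    proof
      assume "card \<sigma> < CARD('n)"
      then have "span (u ` \<sigma>) \<subseteq> Z" unfolding Z_def using \<sigma>(1) by blast
      then show False using \<sigma>(2) that ray_cone_subset_span by blast
    qed
    then have "\<sigma> \<in> max_cones u Sig"
      using smooth_fan_card_le[OF sm \<sigma>(1)] \<sigma>(1) unfolding max_cones_def by auto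
    then show "y \<in> U" using \<sigma>(2) unfolding U_def by blast
  qed
  have "x \<in> U"
  proof (rule ccontr)
    assume "x \<notin> U"
    then have "open (- U)" "x \<in> - U" using \<open>closed U\<close> by auto
    then obtain e where e: "e > 0" "ball x e \<subseteq> - U"
      using open_contains_ball by blast
    have "\<not> ball x e \<subseteq> Z"
      using open_not_negligible[of "ball x e"] e(1) \<open>negligible Z\<close> negligible_subset by auto
    then show False using e(2) \<open>\<And>y. y \<notin> Z \<Longrightarrow> y \<in> U\<close> by blast
  qed
  then obtain \<sigma> where "\<sigma> \<in> max_cones u Sig" "x \<in> ray_cone u \<sigma>" unfolding U_def by blast
  then show ?thesis by (rule that)
qed

lemma max_cone_integral_coords:
  fixes u :: "'r::finite \<Rightarrow> real^'n"
  assumes sm: "smooth_fan u Sig" and \<sigma>: "\<sigma> \<in> max_cones u Sig" and x: "int_vec x"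
  obtains c :: "'r \<Rightarrow> int" where "\<forall>\<rho>. \<rho> \<notin> \<sigma> \<longrightarrow> c \<rho> = 0" "x = (\<Sum>\<rho>\<in>UNIV. of_int (c \<rho>) *\<^sub>R u \<rho>)"
proof -
  have "\<sigma> \<in> Sig" using \<sigma> unfolding max_cones_def by auto
  moreover have "x \<in> span (u ` \<sigma>)" using span_max_cone[OF sm \<sigma>] by simp
  ultimately have "x \<in> int_span u \<sigma>" using sm x unfolding smooth_fan_def by blast
  then obtain c where c: "\<forall>\<rho>\<in>\<sigma>. c \<rho> \<in> \<int>" "x = (\<Sum>\<rho>\<in>\<sigma>. c \<rho> *\<^sub>R u \<rho>)"
    unfolding int_span_def by blast
  define ci where "ci \<rho> = (if \<rho> \<in> \<sigma> then \<lfloor>c \<rho>\<rfloor> else 0)" for \<rho>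
  have "(\<Sum>\<rho>\<in>UNIV. of_int (ci \<rho>) *\<^sub>R u \<rho>) = (\<Sum>\<rho>\<in>\<sigma>. of_int (ci \<rho>) *\<^sub>R u \<rho>)"
    by (rule sum.mono_neutral_right) (auto simp: ci_def)
  also have "\<dots> = x"
    using c by (auto simp: ci_def intro!: sum.cong)
  finally show ?thesis by (intro that[of ci]) (simp_all add: ci_def)
qed

lemma smooth_cone_dual_vector:
  fixes u :: "'r::finite \<Rightarrow> real^'n"
  assumes "smooth_fan u Sig" "\<sigma> \<in> Sig"
  obtains \<mu> where "\<forall>\<rho>\<in>\<sigma>. \<mu> \<bullet> u \<rho> = b \<rho>"
proof -
  have inj: "inj_on u \<sigma>" and indep: "\<not> dependent (u ` \<sigma>)"
    using assms unfolding smooth_fan_def by auto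
  obtain g where g: "linear g" "\<forall>x\<in>u ` \<sigma>. g x = b (inv_into \<sigma> u x)"
    using linear_independent_extend[OF indep, of "\<lambda>x. b (inv_into \<sigma> u x)"] by blast
  have adj: "adjoint g 1 \<bullet> v = g v" for v
    using adjoint_works[OF g(1), of v 1] by (simp add: inner_commute)
  have "\<forall>\<rho>\<in>\<sigma>. adjoint g 1 \<bullet> u \<rho> = b \<rho>"
    using g(2) by (simp add: adj inv_into_f_f[OF inj])
  then show ?thesis by (rule that)
qed

subsection \<open>Standard monomials\<close>

definition lattice_support :: "('r + 'k \<Rightarrow>\<^sub>0 nat) \<Rightarrow> 'r set" where
  "lattice_support e = {\<rho>. Poly_Mapping.lookup e (Inl \<rho>) \<noteq> 0}"

definition standard_monom :: "('r::finite \<Rightarrow> real^'n) \<Rightarrow> 'r set set \<Rightarrow> ('r + 'k \<Rightarrow>\<^sub>0 nat) \<Rightarrow> bool" where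
  "standard_monom u Sig e \<longleftrightarrow> (\<exists>\<sigma>\<in>max_cones u Sig. lattice_support e \<subseteq> \<sigma>)"

lemma lattice_support_subset_iff:
  "lattice_support e \<subseteq> \<sigma> \<longleftrightarrow> (\<forall>\<rho>. \<rho> \<notin> \<sigma> \<longrightarrow> Poly_Mapping.lookup e (Inl \<rho>) = 0)"
  unfolding lattice_support_def by auto

lemma standard_monom_dvd:
  assumes "standard_monom u Sig (s + t)"
  shows "standard_monom u Sig t"
proof -
  have "lattice_support t \<subseteq> lattice_support (s + t)"
    by (auto simp: lattice_support_def lookup_add)
  then show ?thesis using assms unfolding standard_monom_def by (meson order_trans)
qed

lemma lattice_deg_on_support:
  fixes u :: "'r::finite \<Rightarrow> real^'n"
  assumes "lattice_support e \<subseteq> \<sigma>"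
  shows "lattice_deg u e = (\<Sum>\<rho>\<in>\<sigma>. real (Poly_Mapping.lookup e (Inl \<rho>)) *\<^sub>R u \<rho>)"
  unfolding lattice_deg_def using assms
  by (intro sum.mono_neutral_right) (auto simp: lattice_support_subset_iff)

lemma smooth_fan_int_vec:
  assumes "smooth_fan u Sig"
  shows "int_vec (u \<rho>)"
proof -
  have "\<forall>\<rho>. int_vec (u \<rho>) \<and> {\<rho>} \<in> Sig"
    using assms unfolding smooth_fan_def by (rule conjunct1)
  then show ?thesis by blast
qed

lemma lattice_deg_integral:
  fixes u :: "'r::finite \<Rightarrow> real^'n"
  assumes "smooth_fan u Sig"
  shows "int_vec (lattice_deg u e)"
  unfolding int_vec_def lattice_deg_def
proof
  fix i
  have "u \<rho> $ i \<in> \<int>" for \<rho> using smooth_fan_int_vec[OF assms] by (simp add: int_vec_def)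
  then show "(\<Sum>\<rho>\<in>UNIV. real (Poly_Mapping.lookup e (Inl \<rho>)) *\<^sub>R u \<rho>) $ i \<in> \<int>"
    by (simp add: sum_component Ints_sum Ints_mult)
qed

lemma multideg_eq_on_cone_imp_eq:
  fixes u :: "'r::finite \<Rightarrow> real^'n"
  assumes sm: "smooth_fan u Sig" and \<sigma>: "\<sigma> \<in> Sig"
    and supp: "lattice_support a \<subseteq> \<sigma>" "lattice_support m \<subseteq> \<sigma>"
    and deg: "multideg u p a = multideg u p m"
  shows "a = m"
proof -
  have "(\<Sum>\<rho>\<in>\<sigma>. real (Poly_Mapping.lookup a (Inl \<rho>)) *\<^sub>R u \<rho>)
      = (\<Sum>\<rho>\<in>\<sigma>. real (Poly_Mapping.lookup m (Inl \<rho>)) *\<^sub>R u \<rho>)"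
    using deg lattice_deg_on_support[OF supp(1), of u] lattice_deg_on_support[OF supp(2), of u]
    by (simp add: multideg_def)
  then have on_cone: "Poly_Mapping.lookup a (Inl \<rho>) = Poly_Mapping.lookup m (Inl \<rho>)" if "\<rho> \<in> \<sigma>" for \<rho>
    using smooth_fan_coeffs_unique[OF sm \<sigma> _ that,
        of "\<lambda>\<rho>. real (Poly_Mapping.lookup a (Inl \<rho>))" "\<lambda>\<rho>. real (Poly_Mapping.lookup m (Inl \<rho>))"]
    by simp
  have inl: "Poly_Mapping.lookup a (Inl \<rho>) = Poly_Mapping.lookup m (Inl \<rho>)" for \<rho>
  proof (cases "\<rho> \<in> \<sigma>")
    case True then show ?thesis by (rule on_cone)
  next
    case False
    then show ?thesis using supp by (simp add: lattice_support_subset_iff)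
  qed
  then have inr: "Poly_Mapping.lookup a (Inr k) = Poly_Mapping.lookup m (Inr k)" for k
    using deg by (simp add: multideg_def block_deg_def fun_eq_iff)
  show "a = m"
  proof (rule poly_mapping_eqI)
    fix v show "Poly_Mapping.lookup a v = Poly_Mapping.lookup m v"
      using inl inr by (cases v) simp_all
  qed
qed

subsection \<open>Weights and divisor classes\<close>

lemma mweight_eq_divisor_pairing:
  fixes w :: "real^('r::finite + 'k::finite)" and p :: "'r \<Rightarrow> 'k"
  shows "mweight w e = (\<Sum>\<rho>\<in>UNIV. div_of_weight p w \<rho> * real (Poly_Mapping.lookup e (Inl \<rho>)))
     + (\<Sum>k\<in>UNIV. w $ Inr k * real_of_int (block_deg p e k))"
proof -
  let ?e = "\<lambda>v. real (Poly_Mapping.lookup e v)"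
  have split: "mweight w e = (\<Sum>\<rho>\<in>UNIV. w $ Inl \<rho> * ?e (Inl \<rho>)) + (\<Sum>k\<in>UNIV. w $ Inr k * ?e (Inr k))"
  proof -
    have "mweight w e = (\<Sum>v\<in>UNIV <+> UNIV. w $ v * ?e v)"
      unfolding mweight_def by (simp only: UNIV_Plus_UNIV)
    also have "\<dots> = sum ((\<lambda>v. w $ v * ?e v) \<circ> Inl) UNIV + sum ((\<lambda>v. w $ v * ?e v) \<circ> Inr) UNIV"
      by (rule sum.Plus) simp_all
    finally show ?thesis by (simp only: comp_def)
  qed
  have group: "(\<Sum>k\<in>UNIV. w $ Inr k * (\<Sum>\<rho>\<in>{\<rho>. p \<rho> = k}. ?e (Inl \<rho>)))
      = (\<Sum>\<rho>\<in>UNIV. w $ Inr (p \<rho>) * ?e (Inl \<rho>))"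
  proof -
    have "(\<Sum>k\<in>UNIV. w $ Inr k * (\<Sum>\<rho>\<in>{\<rho>. p \<rho> = k}. ?e (Inl \<rho>)))
        = (\<Sum>k\<in>UNIV. \<Sum>\<rho>\<in>{\<rho>\<in>UNIV. p \<rho> = k}. w $ Inr (p \<rho>) * ?e (Inl \<rho>))"
      by (simp add: sum_distrib_left)
    also have "\<dots> = (\<Sum>\<rho>\<in>UNIV. w $ Inr (p \<rho>) * ?e (Inl \<rho>))"
      by (rule sum.group) auto
    finally show ?thesis .
  qed
  have "(\<Sum>\<rho>\<in>UNIV. div_of_weight p w \<rho> * ?e (Inl \<rho>)) + (\<Sum>k\<in>UNIV. w $ Inr k * real_of_int (block_deg p e k))
     = (\<Sum>\<rho>\<in>UNIV. w $ Inl \<rho> * ?e (Inl \<rho>)) - (\<Sum>\<rho>\<in>UNIV. w $ Inr (p \<rho>) * ?e (Inl \<rho>))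
       + ((\<Sum>k\<in>UNIV. w $ Inr k * (\<Sum>\<rho>\<in>{\<rho>. p \<rho> = k}. ?e (Inl \<rho>))) + (\<Sum>k\<in>UNIV. w $ Inr k * ?e (Inr k)))"
    unfolding div_of_weight_def block_deg_def
    by (simp add: left_diff_distrib sum_subtractf distrib_left sum.distrib)
  also have "\<dots> = mweight w e" using group split by simp
  finally show ?thesis by simp
qed

lemma mweight_diff_eq:
  fixes w :: "real^('r::finite + 'k::finite)" and p :: "'r \<Rightarrow> 'k"
  assumes "block_deg p a = block_deg p m"
  shows "mweight w a - mweight w m = (\<Sum>\<rho>\<in>UNIV. div_of_weight p w \<rho> *
    (real (Poly_Mapping.lookup a (Inl \<rho>)) - real (Poly_Mapping.lookup m (Inl \<rho>))))"
  using assms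
  by (simp add: mweight_eq_divisor_pairing[where p = p] right_diff_distrib sum_subtractf)

text \<open>Adding the principal divisor of the character \<open>\<mu>\<close> does not change the pairing with a
  relation among the rays; choosing \<open>\<mu>\<close> to cancel \<open>a\<close> on \<open>\<sigma>\<close> leaves only the rays off \<open>\<sigma>\<close>.\<close>

lemma pairing_eq_sum_off_cone:
  fixes u :: "'r::finite \<Rightarrow> real^'n"
  assumes deg: "(\<Sum>\<rho>\<in>UNIV. f \<rho> *\<^sub>R u \<rho>) = (\<Sum>\<rho>\<in>UNIV. g \<rho> *\<^sub>R u \<rho>)"
    and on_cone: "\<forall>\<rho>\<in>\<sigma>. \<mu> \<bullet> u \<rho> = - a \<rho>"
    and g_off: "\<forall>\<rho>. \<rho> \<notin> \<sigma> \<longrightarrow> g \<rho> = 0"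
  shows "(\<Sum>\<rho>\<in>UNIV. a \<rho> * (f \<rho> - g \<rho>)) = (\<Sum>\<rho>\<in>-\<sigma>. (a \<rho> + \<mu> \<bullet> u \<rho>) * f \<rho>)"
proof -
  have "(\<Sum>\<rho>\<in>UNIV. (\<mu> \<bullet> u \<rho>) * (f \<rho> - g \<rho>))
      = \<mu> \<bullet> ((\<Sum>\<rho>\<in>UNIV. f \<rho> *\<^sub>R u \<rho>) - (\<Sum>\<rho>\<in>UNIV. g \<rho> *\<^sub>R u \<rho>))"
    by (simp add: inner_diff_right inner_sum_right algebra_simps sum_subtractf)
  then have "(\<Sum>\<rho>\<in>UNIV. (\<mu> \<bullet> u \<rho>) * (f \<rho> - g \<rho>)) = 0" using deg by simp
  then have "(\<Sum>\<rho>\<in>UNIV. a \<rho> * (f \<rho> - g \<rho>)) = (\<Sum>\<rho>\<in>UNIV. (a \<rho> + \<mu> \<bullet> u \<rho>) * (f \<rho> - g \<rho>))"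
    by (simp add: distrib_right sum.distrib)
  also have "\<dots> = (\<Sum>\<rho>\<in>-\<sigma>. (a \<rho> + \<mu> \<bullet> u \<rho>) * (f \<rho> - g \<rho>))"
    by (rule sum.mono_neutral_right) (auto simp: on_cone)
  also have "\<dots> = (\<Sum>\<rho>\<in>-\<sigma>. (a \<rho> + \<mu> \<bullet> u \<rho>) * f \<rho>)"
    using g_off by (intro sum.cong) auto
  finally show ?thesis .
qed

lemma kahler_standard_monom_lightest:
  fixes u :: "'r::finite \<Rightarrow> real^'n" and p :: "'r \<Rightarrow> 'k::finite"
  assumes sm: "smooth_fan u Sig" and wK: "w \<in> kahler_pre u Sig p"
    and std: "standard_monom u Sig m" and deg: "multideg u p a = multideg u p m" and ne: "a \<noteq> m"
  shows "mweight w m < mweight w a"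
proof -
  let ?A = "div_of_weight p w" and ?x = "\<lambda>e \<rho>. real (Poly_Mapping.lookup e (Inl \<rho>))"
  obtain \<sigma> where \<sigma>: "\<sigma> \<in> max_cones u Sig" and supp_m: "lattice_support m \<subseteq> \<sigma>"
    using std unfolding standard_monom_def by blast
  have "\<sigma> \<in> Sig" using \<sigma> unfolding max_cones_def by auto
  obtain \<mu> where on: "\<forall>\<rho>\<in>\<sigma>. \<mu> \<bullet> u \<rho> = - ?A \<rho>" and off: "\<forall>\<rho>. \<rho> \<notin> \<sigma> \<longrightarrow> \<mu> \<bullet> u \<rho> > - ?A \<rho>"
    using wK \<sigma> unfolding kahler_pre_def ample_div_def by blast
  have "mweight w a - mweight w m = (\<Sum>\<rho>\<in>UNIV. ?A \<rho> * (?x a \<rho> - ?x m \<rho>))"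
    using deg by (intro mweight_diff_eq) (simp add: multideg_def)
  also have "\<dots> = (\<Sum>\<rho>\<in>-\<sigma>. (?A \<rho> + \<mu> \<bullet> u \<rho>) * ?x a \<rho>)"
  proof (rule pairing_eq_sum_off_cone[OF _ on])
    show "(\<Sum>\<rho>\<in>UNIV. ?x a \<rho> *\<^sub>R u \<rho>) = (\<Sum>\<rho>\<in>UNIV. ?x m \<rho> *\<^sub>R u \<rho>)"
      using deg by (simp add: multideg_def lattice_deg_def)
    show "\<forall>\<rho>. \<rho> \<notin> \<sigma> \<longrightarrow> ?x m \<rho> = 0"
      using supp_m by (auto simp: lattice_support_def)
  qed
  finally have diff: "mweight w a - mweight w m = (\<Sum>\<rho>\<in>-\<sigma>. (?A \<rho> + \<mu> \<bullet> u \<rho>) * ?x a \<rho>)" .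
  show ?thesis
  proof (cases "lattice_support a \<subseteq> \<sigma>")
    case True
    then show ?thesis using multideg_eq_on_cone_imp_eq[OF sm \<open>\<sigma> \<in> Sig\<close> True supp_m deg] ne by simp
  next
    case False
    then obtain \<rho> where \<rho>: "\<rho> \<notin> \<sigma>" "Poly_Mapping.lookup a (Inl \<rho>) \<noteq> 0"
      by (auto simp: lattice_support_def)
    have pos: "?A \<rho>' + \<mu> \<bullet> u \<rho>' > 0" if "\<rho>' \<notin> \<sigma>" for \<rho>'
      using off that by force
    have "(\<Sum>\<rho>\<in>-\<sigma>. (?A \<rho> + \<mu> \<bullet> u \<rho>) * ?x a \<rho>) > 0"
    proof (rule sum_pos2[of "-\<sigma>" \<rho>])
      show "0 < (?A \<rho> + \<mu> \<bullet> u \<rho>) * ?x a \<rho>" using pos[OF \<rho>(1)] \<rho>(2) by simp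
      show "0 \<le> (?A \<rho>' + \<mu> \<bullet> u \<rho>') * ?x a \<rho>'" if "\<rho>' \<in> -\<sigma>" for \<rho>'
        using pos[of \<rho>'] that by simp
    qed (use \<rho>(1) in auto)
    with diff show ?thesis by simp
  qed
qed

subsection \<open>Standard monomials and convexity\<close>

lemma nef_partition_block_bound:
  fixes u :: "'r::finite \<Rightarrow> real^'n" and p :: "'r \<Rightarrow> 'k::finite" and g :: "'r \<Rightarrow> nat"
  assumes np: "nef_partition u Sig p" and \<sigma>: "\<sigma> \<in> max_cones u Sig"
    and g_off: "\<forall>\<rho>. \<rho> \<notin> \<sigma> \<longrightarrow> g \<rho> = 0"
    and deg: "(\<Sum>\<rho>\<in>UNIV. real (g \<rho>) *\<^sub>R u \<rho>) = lattice_deg u a"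
  shows "(\<Sum>\<rho>\<in>{\<rho>. p \<rho> = k}. int (g \<rho>)) \<le> block_deg p a k"
proof -
  define E where "E \<rho> = (if p \<rho> = k then 1 else 0 :: real)" for \<rho>
  let ?x = "\<lambda>\<rho>. real (Poly_Mapping.lookup a (Inl \<rho>))"
  obtain \<mu> where on: "\<forall>\<rho>\<in>\<sigma>. \<mu> \<bullet> u \<rho> = - E \<rho>" and off: "\<forall>\<rho>. \<rho> \<notin> \<sigma> \<longrightarrow> \<mu> \<bullet> u \<rho> \<ge> - E \<rho>"
    using np \<sigma> unfolding nef_partition_def nef_div_def E_def by blast
  have "(\<Sum>\<rho>\<in>UNIV. E \<rho> * (?x \<rho> - real (g \<rho>))) = (\<Sum>\<rho>\<in>-\<sigma>. (E \<rho> + \<mu> \<bullet> u \<rho>) * ?x \<rho>)"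
    by (rule pairing_eq_sum_off_cone[OF _ on]) (use deg g_off in \<open>simp_all add: lattice_deg_def\<close>)
  also have "\<dots> \<ge> 0"
  proof (rule sum_nonneg)
    fix \<rho> assume "\<rho> \<in> -\<sigma>"
    then have "0 \<le> E \<rho> + \<mu> \<bullet> u \<rho>" using off by force
    then show "0 \<le> (E \<rho> + \<mu> \<bullet> u \<rho>) * ?x \<rho>" by simp
  qed
  finally have "(\<Sum>\<rho>\<in>UNIV. E \<rho> * real (g \<rho>)) \<le> (\<Sum>\<rho>\<in>UNIV. E \<rho> * ?x \<rho>)"
    by (simp add: right_diff_distrib sum_subtractf)
  moreover have "(\<Sum>\<rho>\<in>UNIV. E \<rho> * t \<rho>) = (\<Sum>\<rho>\<in>{\<rho>. p \<rho> = k}. t \<rho>)" for t :: "'r \<Rightarrow> real"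
  proof -
    have "(\<Sum>\<rho>\<in>UNIV. E \<rho> * t \<rho>) = (\<Sum>\<rho>\<in>UNIV. if p \<rho> = k then t \<rho> else 0)"
      by (rule sum.cong) (simp_all add: E_def)
    then show ?thesis by (simp add: sum.inter_filter[symmetric])
  qed
  ultimately have "(\<Sum>\<rho>\<in>{\<rho>. p \<rho> = k}. real (g \<rho>)) \<le> (\<Sum>\<rho>\<in>{\<rho>. p \<rho> = k}. ?x \<rho>)"
    by simp
  then have "real_of_int (\<Sum>\<rho>\<in>{\<rho>. p \<rho> = k}. int (g \<rho>))
      \<le> real_of_int (\<Sum>\<rho>\<in>{\<rho>. p \<rho> = k}. int (Poly_Mapping.lookup a (Inl \<rho>)))"
    by simp
  then have "(\<Sum>\<rho>\<in>{\<rho>. p \<rho> = k}. int (g \<rho>)) \<le> (\<Sum>\<rho>\<in>{\<rho>. p \<rho> = k}. int (Poly_Mapping.lookup a (Inl \<rho>)))"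
    by (simp only: of_int_le_iff)
  then show ?thesis unfolding block_deg_def by simp
qed

lemma standard_monom_exists:
  fixes u :: "'r::finite \<Rightarrow> real^'n" and p :: "'r \<Rightarrow> 'k::finite"
  assumes sm: "smooth_fan u Sig" and cf: "complete_fan u Sig" and np: "nef_partition u Sig p"
  obtains m where "standard_monom u Sig m" "multideg u p m = multideg u p a"
proof -
  obtain \<sigma> where \<sigma>: "\<sigma> \<in> max_cones u Sig" and cone: "lattice_deg u a \<in> ray_cone u \<sigma>"
    using complete_fan_max_cones_cover[OF sm cf] by blast
  have "\<sigma> \<in> Sig" using \<sigma> unfolding max_cones_def by auto
  obtain c where c_off: "\<forall>\<rho>. \<rho> \<notin> \<sigma> \<longrightarrow> c \<rho> = 0"
    and c: "lattice_deg u a = (\<Sum>\<rho>\<in>UNIV. of_int (c \<rho>) *\<^sub>R u \<rho>)"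
    using max_cone_integral_coords[OF sm \<sigma> lattice_deg_integral[OF sm]] by blast
  obtain d where d: "\<forall>\<rho>\<in>\<sigma>. 0 \<le> d \<rho>" "lattice_deg u a = (\<Sum>\<rho>\<in>\<sigma>. d \<rho> *\<^sub>R u \<rho>)"
    using cone unfolding ray_cone_def by blast
  have "(\<Sum>\<rho>\<in>UNIV. of_int (c \<rho>) *\<^sub>R u \<rho>) = (\<Sum>\<rho>\<in>\<sigma>. of_int (c \<rho>) *\<^sub>R u \<rho>)"
    using c_off by (intro sum.mono_neutral_right) auto
  then have "of_int (c \<rho>) = d \<rho>" if "\<rho> \<in> \<sigma>" for \<rho>
    using smooth_fan_coeffs_unique[OF sm \<open>\<sigma> \<in> Sig\<close> _ that, of "\<lambda>\<rho>. of_int (c \<rho>)" d] c d(2) by simp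
  then have c_nonneg: "0 \<le> c \<rho>" for \<rho>
    using d(1) c_off by (cases "\<rho> \<in> \<sigma>") fastforce+
  define g where "g \<rho> = nat (c \<rho>)" for \<rho>
  have g_off: "\<forall>\<rho>. \<rho> \<notin> \<sigma> \<longrightarrow> g \<rho> = 0" using c_off by (simp add: g_def)
  have g_deg: "(\<Sum>\<rho>\<in>UNIV. real (g \<rho>) *\<^sub>R u \<rho>) = lattice_deg u a"
    using c c_nonneg by (simp add: g_def)
  define m where "m = Abs_poly_mapping (\<lambda>v. case v of Inl \<rho> \<Rightarrow> g \<rho>
      | Inr k \<Rightarrow> nat (block_deg p a k - (\<Sum>\<rho>\<in>{\<rho>. p \<rho> = k}. int (g \<rho>))))"
  have "standard_monom u Sig m"
    using \<sigma> g_off unfolding standard_monom_def by (auto simp: lattice_support_subset_iff m_def)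
  moreover have "lattice_deg u m = lattice_deg u a"
    using g_deg by (simp add: lattice_deg_def m_def)
  moreover have "block_deg p m = block_deg p a"
    using nef_partition_block_bound[OF np \<sigma> g_off g_deg] by (simp add: block_deg_def m_def fun_eq_iff)
  ultimately show ?thesis using that by (simp add: multideg_def)
qed

lemma exists_monoms_equal_block_deg:
  fixes f g :: "'r::finite \<Rightarrow> nat" and p :: "'r \<Rightarrow> 'k::finite"
  obtains e e' :: "'r + 'k \<Rightarrow>\<^sub>0 nat"
  where "\<forall>\<rho>. Poly_Mapping.lookup e (Inl \<rho>) = f \<rho>" "\<forall>\<rho>. Poly_Mapping.lookup e' (Inl \<rho>) = g \<rho>"
    "block_deg p e = block_deg p e'"
proof -
  define M where "M = (\<Sum>\<rho>\<in>UNIV. f \<rho> + g \<rho>)"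
  define pad :: "('r \<Rightarrow> nat) \<Rightarrow> 'r + 'k \<Rightarrow>\<^sub>0 nat" where
    "pad h = Abs_poly_mapping (\<lambda>v. case v of Inl \<rho> \<Rightarrow> h \<rho> | Inr k \<Rightarrow> M - (\<Sum>\<rho>\<in>{\<rho>. p \<rho> = k}. h \<rho>))" for h
  have "block_deg p (pad h) k = int M" if "\<And>\<rho>. h \<rho> \<le> f \<rho> + g \<rho>" for h k
  proof -
    have "(\<Sum>\<rho>\<in>{\<rho>. p \<rho> = k}. h \<rho>) \<le> (\<Sum>\<rho>\<in>UNIV. h \<rho>)" by (rule sum_mono2) auto
    also have "\<dots> \<le> M" unfolding M_def by (rule sum_mono) (use that in auto)
    finally show ?thesis by (simp add: block_deg_def pad_def of_nat_diff flip: of_nat_sum)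
  qed
  then have "block_deg p (pad f) = block_deg p (pad g)" by (simp add: fun_eq_iff)
  then show thesis by (intro that[of "pad f" "pad g"]) (simp_all add: pad_def)
qed

text \<open>For \<open>\<rho>\<close> off \<open>\<sigma>\<close> write \<open>u \<rho> = (\<Sum>\<rho>'. c \<rho>' *\<^sub>R u \<rho>')\<close> with integers \<open>c\<close>
  supported on \<open>\<sigma>\<close>. The monomials with lattice exponents \<open>\<delta>\<^sub>\<rho> + c\<^sup>-\<close> and \<open>c\<^sup>+\<close>, padded to
  equal block degree, have the same multidegree and the second is standard; comparing their weights
  is the convexity inequality at \<open>\<rho>\<close>.\<close>

lemma standard_monoms_lightest_imp_convex:
  fixes u :: "'r::finite \<Rightarrow> real^'n" and p :: "'r \<Rightarrow> 'k::finite" and w :: "real^('r + 'k)"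
  assumes sm: "smooth_fan u Sig"
    and lightest: "\<And>a m. standard_monom u Sig m \<Longrightarrow> multideg u p a = multideg u p m
                     \<Longrightarrow> mweight w m \<le> mweight w a"
    and \<sigma>: "\<sigma> \<in> max_cones u Sig" and on: "\<forall>\<rho>\<in>\<sigma>. \<mu> \<bullet> u \<rho> = - div_of_weight p w \<rho>"
    and \<rho>: "\<rho> \<notin> \<sigma>"
  shows "\<mu> \<bullet> u \<rho> \<ge> - div_of_weight p w \<rho>"
proof -
  let ?A = "div_of_weight p w"
  obtain c where c_off: "\<forall>\<rho>'. \<rho>' \<notin> \<sigma> \<longrightarrow> c \<rho>' = 0"
    and c: "u \<rho> = (\<Sum>\<rho>'\<in>UNIV. of_int (c \<rho>') *\<^sub>R u \<rho>')"
    using max_cone_integral_coords[OF sm \<sigma> smooth_fan_int_vec[OF sm]] by blast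
  define f where "f \<rho>' = (if \<rho>' = \<rho> then 1 else 0) + nat (- c \<rho>')" for \<rho>'
  define g where "g \<rho>' = nat (c \<rho>')" for \<rho>'
  obtain a m where a: "\<forall>\<rho>'. Poly_Mapping.lookup a (Inl \<rho>') = f \<rho>'"
    and m: "\<forall>\<rho>'. Poly_Mapping.lookup m (Inl \<rho>') = g \<rho>'" and blk: "block_deg p a = block_deg p m"
    using exists_monoms_equal_block_deg[of f g p] by blast
  have summand: "real (f \<rho>') *\<^sub>R u \<rho>' - real (g \<rho>') *\<^sub>R u \<rho>'
      = (if \<rho>' = \<rho> then u \<rho>' else 0) - of_int (c \<rho>') *\<^sub>R u \<rho>'" for \<rho>'
    by (cases "0 \<le> c \<rho>'") (auto simp: f_def g_def algebra_simps)
  have "(\<Sum>\<rho>'\<in>UNIV. real (f \<rho>') *\<^sub>R u \<rho>') - (\<Sum>\<rho>'\<in>UNIV. real (g \<rho>') *\<^sub>R u \<rho>')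
      = (\<Sum>\<rho>'\<in>UNIV. (if \<rho>' = \<rho> then u \<rho>' else 0) - of_int (c \<rho>') *\<^sub>R u \<rho>')"
    unfolding sum_subtractf[symmetric] summand ..
  also have "\<dots> = 0" using c by (simp add: sum_subtractf)
  finally have deg: "(\<Sum>\<rho>'\<in>UNIV. real (f \<rho>') *\<^sub>R u \<rho>') = (\<Sum>\<rho>'\<in>UNIV. real (g \<rho>') *\<^sub>R u \<rho>')"
    by simp
  have "standard_monom u Sig m"
    unfolding standard_monom_def lattice_support_subset_iff
    using \<sigma> c_off m by (intro bexI[of _ \<sigma>]) (simp_all add: g_def)
  moreover have "multideg u p a = multideg u p m"
    using deg a m blk by (simp add: multideg_def lattice_deg_def)
  ultimately have "0 \<le> mweight w a - mweight w m" using lightest by simp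
  also have "\<dots> = (\<Sum>\<rho>'\<in>UNIV. ?A \<rho>' * (real (f \<rho>') - real (g \<rho>')))"
    using mweight_diff_eq[OF blk] a m by simp
  also have "\<dots> = (\<Sum>\<rho>'\<in>-\<sigma>. (?A \<rho>' + \<mu> \<bullet> u \<rho>') * real (f \<rho>'))"
    by (rule pairing_eq_sum_off_cone[OF deg on]) (simp add: g_def c_off)
  also have "\<dots> = (\<Sum>\<rho>'\<in>-\<sigma>. if \<rho>' = \<rho> then ?A \<rho>' + \<mu> \<bullet> u \<rho>' else 0)"
    by (rule sum.cong) (simp_all add: f_def c_off)
  also have "\<dots> = ?A \<rho> + \<mu> \<bullet> u \<rho>" using \<rho> by simp
  finally show ?thesis by simp
qed

lemma nef_if_standard_monoms_lightest:
  fixes u :: "'r::finite \<Rightarrow> real^'n" and p :: "'r \<Rightarrow> 'k::finite" and w :: "real^('r + 'k)"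
  assumes sm: "smooth_fan u Sig"
    and lightest: "\<And>a m. standard_monom u Sig m \<Longrightarrow> multideg u p a = multideg u p m
                     \<Longrightarrow> mweight w m \<le> mweight w a"
  shows "nef_div u Sig (div_of_weight p w)"
  unfolding nef_div_def
proof
  fix \<sigma> assume \<sigma>: "\<sigma> \<in> max_cones u Sig"
  then have "\<sigma> \<in> Sig" unfolding max_cones_def by auto
  then obtain \<mu> where on: "\<forall>\<rho>\<in>\<sigma>. \<mu> \<bullet> u \<rho> = - div_of_weight p w \<rho>"
    using smooth_cone_dual_vector[OF sm, of \<sigma> "\<lambda>\<rho>. - div_of_weight p w \<rho>"] by blast
  with standard_monoms_lightest_imp_convex[OF sm lightest \<sigma> on]
  show "\<exists>\<mu>. (\<forall>\<rho>\<in>\<sigma>. \<mu> \<bullet> u \<rho> = - div_of_weight p w \<rho>) \<and>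
            (\<forall>\<rho>. \<rho> \<notin> \<sigma> \<longrightarrow> - div_of_weight p w \<rho> \<le> \<mu> \<bullet> u \<rho>)"
    by blast
qed

subsection \<open>The closed Kaehler cone\<close>

lemma ample_add_nef:
  assumes "nef_div u Sig a" "ample_div u Sig a0" "t > 0"
  shows "ample_div u Sig (\<lambda>\<rho>. a \<rho> + t * a0 \<rho>)"
  unfolding ample_div_def
proof
  fix \<sigma> assume \<sigma>: "\<sigma> \<in> max_cones u Sig"
  obtain m1 where m1: "\<forall>\<rho>\<in>\<sigma>. m1 \<bullet> u \<rho> = - a \<rho>" "\<forall>\<rho>. \<rho> \<notin> \<sigma> \<longrightarrow> m1 \<bullet> u \<rho> \<ge> - a \<rho>"
    using assms(1) \<sigma> unfolding nef_div_def by blast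
  obtain m0 where m0: "\<forall>\<rho>\<in>\<sigma>. m0 \<bullet> u \<rho> = - a0 \<rho>" "\<forall>\<rho>. \<rho> \<notin> \<sigma> \<longrightarrow> m0 \<bullet> u \<rho> > - a0 \<rho>"
    using assms(2) \<sigma> unfolding ample_div_def by blast
  show "\<exists>m. (\<forall>\<rho>\<in>\<sigma>. m \<bullet> u \<rho> = - (a \<rho> + t * a0 \<rho>)) \<and>
            (\<forall>\<rho>. \<rho> \<notin> \<sigma> \<longrightarrow> m \<bullet> u \<rho> > - (a \<rho> + t * a0 \<rho>))"
  proof (intro exI[of _ "m1 + t *\<^sub>R m0"] conjI ballI allI impI)
    fix \<rho> assume "\<rho> \<in> \<sigma>"
    then show "(m1 + t *\<^sub>R m0) \<bullet> u \<rho> = - (a \<rho> + t * a0 \<rho>)"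
      using m1 m0 by (simp add: inner_add_left)
  next
    fix \<rho> assume \<rho>: "\<rho> \<notin> \<sigma>"
    have "t * (m0 \<bullet> u \<rho>) > t * (- a0 \<rho>)"
      using m0(2) \<rho> assms(3) by (intro mult_strict_left_mono) auto
    then show "(m1 + t *\<^sub>R m0) \<bullet> u \<rho> > - (a \<rho> + t * a0 \<rho>)"
      using m1(2)[rule_format, OF \<rho>] by (simp add: inner_add_left)
  qed
qed

lemma nef_weight_in_closure_kahler:
  assumes w0: "w0 \<in> kahler_pre u Sig p" and nef: "nef_div u Sig (div_of_weight p w)"
  shows "w \<in> closure (kahler_pre u Sig p)"
proof -
  have "w + t *\<^sub>R w0 \<in> kahler_pre u Sig p" if "t > 0" for t
  proof -
    have "ample_div u Sig (\<lambda>\<rho>. div_of_weight p w \<rho> + t * div_of_weight p w0 \<rho>)"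
      using w0 by (intro ample_add_nef[OF nef _ that]) (simp add: kahler_pre_def)
    then show ?thesis by (simp add: kahler_pre_def div_of_weight_def algebra_simps)
  qed
  moreover have "(\<lambda>n. w + (1 / real n) *\<^sub>R w0) \<longlonglongrightarrow> w"
    using tendsto_add[OF tendsto_const tendsto_scaleR[OF lim_1_over_n tendsto_const]] by simp
  then have "(\<lambda>n. w + (1 / Suc n) *\<^sub>R w0) \<longlonglongrightarrow> w"
    by (rule LIMSEQ_Suc)
  ultimately show ?thesis
    by (intro closure_sequential[THEN iffD2] exI[of _ "\<lambda>n. w + (1 / Suc n) *\<^sub>R w0"]) auto
qed

lemma init_toric_ideal_kahler:
  fixes u :: "'r::finite \<Rightarrow> real^'n" and p :: "'r \<Rightarrow> 'k::finite"
  assumes sm: "smooth_fan u Sig" and cf: "complete_fan u Sig" and np: "nef_partition u Sig p"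
    and w: "w \<in> kahler_pre u Sig p"
  shows "init_ideal w (toric_ideal u p) = supported_outside (standard_monom u Sig)"
proof (rule init_toric_ideal_eq_supported_outside)
  show "\<exists>m. standard_monom u Sig m \<and> multideg u p m = multideg u p a" for a
    using standard_monom_exists[OF sm cf np, of a] by blast
  show "mweight w m < mweight w a"
    if "standard_monom u Sig m" "multideg u p a = multideg u p m" "a \<noteq> m" for a m
    using kahler_standard_monom_lightest[OF sm w that] .
  show "standard_monom u Sig t" if "standard_monom u Sig (s + t)" for s t
    using that by (rule standard_monom_dvd)
qed

theorem mainTheorem4:
  fixes u :: "'r::finite \<Rightarrow> real^'n"
    and Sig :: "'r set set"
    and p :: "'r \<Rightarrow> 'k::finite"
  assumes "smooth_fan u Sig"
    and "complete_fan u Sig"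
    and "projective_fan u Sig"
    and "nef_partition u Sig p"
  shows "\<exists>w. closure (kahler_pre u Sig p) = groebner_cone (toric_ideal u p) w"
proof -
  let ?K = "kahler_pre u Sig p" and ?I = "toric_ideal u p"
  let ?nonstd = "supported_outside (standard_monom u Sig)"
  obtain a0 where "ample_div u Sig a0" using assms(3) unfolding projective_fan_def by blast
  then have w0: "(\<chi> v. case v of Inl \<rho> \<Rightarrow> a0 \<rho> | Inr k \<Rightarrow> 0) \<in> ?K" (is "?w0 \<in> _")
    by (simp add: kahler_pre_def div_of_weight_def)
  define C where "C = {w. init_ideal w ?I = init_ideal ?w0 ?I}"
  have C: "C = {w. init_ideal w ?I = ?nonstd}"
    using init_toric_ideal_kahler[OF assms(1,2,4) w0] by (simp add: C_def)
  have "?K \<subseteq> C"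
    using init_toric_ideal_kahler[OF assms(1,2,4)] by (auto simp: C)
  moreover have "C \<subseteq> closure ?K"
  proof
    fix w assume "w \<in> C"
    then have "init_ideal w ?I = ?nonstd" by (simp add: C)
    then have "nef_div u Sig (div_of_weight p w)"
      by (intro nef_if_standard_monoms_lightest[OF assms(1)] init_toric_ideal_lightest)
    then show "w \<in> closure ?K" by (rule nef_weight_in_closure_kahler[OF w0])
  qed
  ultimately have "closure ?K = closure C"
    using closure_mono[of ?K C] closure_mono[of C "closure ?K"] by auto
  then show ?thesis unfolding groebner_cone_def C_def by blast
qed

end
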